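(* Let $G$ be a connected graph with girth at least $5$, let $w\in V(G)$, and let $T$ be a breadth-first spanning tree of $G$ rooted at $w$, with vertex order $\sigma$. Let $\sigma'$ be a non-empty prefix of $\sigma$, let $\varphi'$ be a proper coloring of the subgraph induced by $\sigma'$, and let $\varphi$ be a greedy coloring of $G$ with respect to $\sigma$ and $\varphi'$. If $\varphi$ fixes each vertex of $\sigma'$, then $\varphi$ is a proper distinguishing coloring of $G$.
   Context: A coloring of $G$ is a map $\varphi:V(G)\to\mathbb{Z}_{>0}$; it is proper if adjacent vertices get different colors. A vertex $u$ is fixed by $\varphi$ if every automorphism $f$ of $G$ with $\varphi(f(v))=\varphi(v)$ for all $v$ satisfies $f(u)=u$. A coloring is distinguishing if it fixes every vertex, i.e. the only color-preserving automorphism is the identity. In a breadth-first spanning tree $T$ rooted at $w$, $\sigma$ is the order in which vertices are visited by the breadth-first search (so $w$ is first and parents precede children); each vertex $v\neq w$ has a parent in $T$, and the siblings of $v$ are the other children of its parent. For $v\in V(G)$, $\sigma_v$ denotes the set of vertices preceding $v$ in $\sigma$; a prefix $\sigma'$ of $\sigma$ is identified with its set of vertices. Greedy coloring with respect to $\sigma$ and $\varphi'$: extend $\varphi'$ to $\varphi$ by coloring each $v\in\sigma\setminus\sigma'$ in the order $\sigma$ as follows. (i) If $v$ has a neighbor in $\sigma_v$ other than its parent, then $\varphi(v)$ is the smallest positive integer not used on $N(v)\cap\sigma_v$. (ii) Otherwise, $\varphi(v)$ is the smallest positive integer not used on $\sigma_v\cap S_v$, where $S_v$ is the set consisting of the parent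 and the siblings of $v$. *)

theory Defs
  imports Main
begin

definition sgraph :: "'a set \<Rightarrow> ('a \<Rightarrow> 'a \<Rightarrow> bool) \<Rightarrow> bool" where
  "sgraph V E \<longleftrightarrow> finite V \<and> (\<forall>x y. E x y \<longrightarrow> x \<in> V \<and> y \<in> V)
     \<and> (\<forall>x y. E x y \<longrightarrow> E y x) \<and> (\<forall>x. \<not> E x x)"

definition connected_graph :: "'a set \<Rightarrow> ('a \<Rightarrow> 'a \<Rightarrow> bool) \<Rightarrow> bool" where
  "connected_graph V E \<longleftrightarrow> V \<noteq> {} \<and> (\<forall>u\<in>V. \<forall>v\<in>V. E\<^sup>*\<^sup>* u v)"

definition is_cycle :: "('a \<Rightarrow> 'a \<Rightarrow> bool) \<Rightarrow> 'a list \<Rightarrow> bool" where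
  "is_cycle E cs \<longleftrightarrow> length cs \<ge> 3 \<and> distinct cs
     \<and> (\<forall>i. Suc i < length cs \<longrightarrow> E (cs ! i) (cs ! Suc i))
     \<and> E (last cs) (hd cs)"

definition girth_at_least :: "'a set \<Rightarrow> ('a \<Rightarrow> 'a \<Rightarrow> bool) \<Rightarrow> nat \<Rightarrow> bool" where
  "girth_at_least V E g \<longleftrightarrow> (\<forall>cs. set cs \<subseteq> V \<and> is_cycle E cs \<longrightarrow> length cs \<ge> g)"

definition pos :: "'a list \<Rightarrow> 'a \<Rightarrow> nat" where
  "pos \<sigma> v = (LEAST i. i < length \<sigma> \<and> \<sigma> ! i = v)"

definition before :: "'a list \<Rightarrow> 'a \<Rightarrow> 'a set" where
  "before \<sigma> v = set (take (pos \<sigma> v) \<sigma>)"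

(* \<sigma> is a breadth-first search order of G rooted at w, and par is the parent map of the
   corresponding BFS spanning tree T: each non-root vertex's parent is its first neighbour
   in \<sigma> (and precedes it), and vertices appear grouped in the order of their parents
   (children of earlier-visited vertices are visited earlier). *)
definition bfs_tree :: "'a set \<Rightarrow> ('a \<Rightarrow> 'a \<Rightarrow> bool) \<Rightarrow> 'a \<Rightarrow> 'a list \<Rightarrow> ('a \<Rightarrow> 'a) \<Rightarrow> bool" where
  "bfs_tree V E w \<sigma> par \<longleftrightarrow>
     distinct \<sigma> \<and> set \<sigma> = V \<and> \<sigma> \<noteq> [] \<and> hd \<sigma> = w
     \<and> (\<forall>v\<in>V. v \<noteq> w \<longrightarrow>
          E v (par v) \<and> par v \<in> before \<sigma> v
          \<and> (\<forall>u\<in>before \<sigma> v. E v u \<longrightarrow> pos \<sigma> (par v) \<le> pos \<sigma> u))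
     \<and> (\<forall>u\<in>V. \<forall>v\<in>V. u \<noteq> w \<longrightarrow> v \<noteq> w \<longrightarrow>
          pos \<sigma> (par u) < pos \<sigma> (par v) \<longrightarrow> pos \<sigma> u < pos \<sigma> v)"

definition proper_on :: "'a set \<Rightarrow> ('a \<Rightarrow> 'a \<Rightarrow> bool) \<Rightarrow> ('a \<Rightarrow> nat) \<Rightarrow> bool" where
  "proper_on S E \<phi> \<longleftrightarrow> (\<forall>u\<in>S. \<forall>v\<in>S. E u v \<longrightarrow> \<phi> u \<noteq> \<phi> v)"

definition coloring_on :: "'a set \<Rightarrow> ('a \<Rightarrow> nat) \<Rightarrow> bool" where
  "coloring_on S \<phi> \<longleftrightarrow> (\<forall>v\<in>S. \<phi> v > 0)"

definition automorphism :: "'a set \<Rightarrow> ('a \<Rightarrow> 'a \<Rightarrow> bool) \<Rightarrow> ('a \<Rightarrow> 'a) \<Rightarrow> bool" where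
  "automorphism V E f \<longleftrightarrow> bij_betw f V V \<and> (\<forall>x\<in>V. \<forall>y\<in>V. E (f x) (f y) \<longleftrightarrow> E x y)"

definition fixes_vertex :: "'a set \<Rightarrow> ('a \<Rightarrow> 'a \<Rightarrow> bool) \<Rightarrow> ('a \<Rightarrow> nat) \<Rightarrow> 'a \<Rightarrow> bool" where
  "fixes_vertex V E \<phi> u \<longleftrightarrow>
     (\<forall>f. automorphism V E f \<and> (\<forall>v\<in>V. \<phi> (f v) = \<phi> v) \<longrightarrow> f u = u)"

definition distinguishing :: "'a set \<Rightarrow> ('a \<Rightarrow> 'a \<Rightarrow> bool) \<Rightarrow> ('a \<Rightarrow> nat) \<Rightarrow> bool" where
  "distinguishing V E \<phi> \<longleftrightarrow> (\<forall>u\<in>V. fixes_vertex V E \<phi> u)"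

definition mex :: "nat set \<Rightarrow> nat" where
  "mex A = (LEAST c. c > 0 \<and> c \<notin> A)"

definition greedy_coloring ::
  "('a \<Rightarrow> 'a \<Rightarrow> bool) \<Rightarrow> 'a \<Rightarrow> 'a list \<Rightarrow> ('a \<Rightarrow> 'a) \<Rightarrow> nat \<Rightarrow> ('a \<Rightarrow> nat) \<Rightarrow> ('a \<Rightarrow> nat) \<Rightarrow> bool" where
  "greedy_coloring E w \<sigma> par k \<phi>' \<phi> \<longleftrightarrow>
     (\<forall>v\<in>set (take k \<sigma>). \<phi> v = \<phi>' v)
     \<and> (\<forall>v\<in>set (drop k \<sigma>).
          (if (\<exists>u\<in>before \<sigma> v. E v u \<and> u \<noteq> par v)
           then \<phi> v = mex (\<phi> ` {u\<in>before \<sigma> v. E v u})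
           else \<phi> v = mex (\<phi> ` (before \<sigma> v \<inter>
                   ({par v} \<union> {u\<in>set \<sigma>. u \<noteq> w \<and> u \<noteq> v \<and> par u = par v})))))"

end

theory Submission imports Defs begin

text \<open>By induction along \<open>\<sigma>\<close>, a colour-preserving automorphism \<open>f\<close> fixes every vertex: the prefix
  by hypothesis, and a later vertex \<open>v\<close> because its parent \<open>p\<close> is already fixed, so \<open>f v\<close> is a
  neighbour of \<open>p\<close>. If \<open>v\<close> has a second earlier neighbour \<open>y\<close>, then \<open>v p (f v) y\<close> would be a
  4-cycle. Otherwise \<open>f v\<close> is a later sibling of \<open>v\<close>. A second earlier neighbour of \<open>f v\<close>
  would, as there are no triangles, precede \<open>v\<close>, be fixed, and hence be adjacent to \<open>v\<close>; so
  \<open>f v\<close> is coloured by rule (ii), which avoids the colour of its earlier sibling \<open>v\<close>.\<close>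

lemma pos_nth: "distinct s \<Longrightarrow> i < length s \<Longrightarrow> pos s (s ! i) = i"
  unfolding pos_def by (rule Least_equality) (auto simp: nth_eq_iff_index_eq)

lemma pos_less_length_nth:
  assumes "distinct s" and "v \<in> set s"
  shows "pos s v < length s" and "s ! pos s v = v"
proof -
  obtain i where "i < length s" "s ! i = v" using assms(2) by (auto simp: in_set_conv_nth)
  with pos_nth[OF assms(1)] show "pos s v < length s" "s ! pos s v = v" by auto
qed

lemma pos_eq_iff:
  "distinct s \<Longrightarrow> u \<in> set s \<Longrightarrow> v \<in> set s \<Longrightarrow> pos s u = pos s v \<longleftrightarrow> u = v"
  by (metis pos_less_length_nth(2))

lemma in_set_take_iff_pos:
  assumes "distinct s"
  shows "u \<in> set (take n s) \<longleftrightarrow> u \<in> set s \<and> pos s u < n"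
proof
  assume "u \<in> set (take n s)"
  then obtain i where "i < length s" "i < n" "s ! i = u" by (auto simp: in_set_conv_nth)
  then show "u \<in> set s \<and> pos s u < n" using pos_nth[OF assms] by auto
next
  assume "u \<in> set s \<and> pos s u < n"
  then show "u \<in> set (take n s)"
    using pos_less_length_nth[OF assms, of u] by (metis in_set_conv_nth length_take min_less_iff_conj nth_take)
qed

lemma in_set_drop_iff_pos:
  assumes "distinct s"
  shows "u \<in> set (drop n s) \<longleftrightarrow> u \<in> set s \<and> \<not> pos s u < n"
proof -
  have "set (take n s) \<inter> set (drop n s) = {}" "set s = set (take n s) \<union> set (drop n s)"
    using assms by (metis append_take_drop_id distinct_append, metis append_take_drop_id set_append)
  then show ?thesis using in_set_take_iff_pos[OF assms] by blast
qed

lemma finite_before [simp]: "finite (before s v)"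
  by (simp add: before_def)

lemma mex_pos: "finite A \<Longrightarrow> mex A > 0"
  and mex_notin: "finite A \<Longrightarrow> mex A \<notin> A"
proof -
  assume "finite A"
  then have "Suc (Max (insert 0 A)) \<notin> A"
    using Max_ge[of "insert 0 A"] by (metis finite_insert insertCI not_less_eq_eq order_refl)
  then have "\<exists>c. c > 0 \<and> c \<notin> A" by blast
  then have "mex A > 0 \<and> mex A \<notin> A" unfolding mex_def by (rule LeastI_ex)
  then show "mex A > 0" "mex A \<notin> A" by auto
qed

lemma girth_at_least_mono: "girth_at_least V E g \<Longrightarrow> h \<le> g \<Longrightarrow> girth_at_least V E h"
  unfolding girth_at_least_def by fastforce

lemma girth_4_no_triangle:
  assumes "girth_at_least V E 4" and "{a, b, c} \<subseteq> V" and "distinct [a, b, c]"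
    and "E a b" "E b c" "E c a"
  shows False
proof -
  have "is_cycle E [a, b, c]" unfolding is_cycle_def using assms by (simp add: All_less_Suc)
  moreover have "set [a, b, c] \<subseteq> V" using assms(2) by simp
  ultimately have "4 \<le> length [a, b, c]" using assms(1) unfolding girth_at_least_def by blast
  then show False by simp
qed

lemma girth_5_no_square:
  assumes "girth_at_least V E 5" and "{a, b, c, d} \<subseteq> V" and "distinct [a, b, c, d]"
    and "E a b" "E b c" "E c d" "E d a"
  shows False
proof -
  have "is_cycle E [a, b, c, d]" unfolding is_cycle_def using assms by (simp add: All_less_Suc)
  moreover have "set [a, b, c, d] \<subseteq> V" using assms(2) by simp
  ultimately have "5 \<le> length [a, b, c, d]" using assms(1) unfolding girth_at_least_def by blast
  then show False by simp
qed

locale bfs_order =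
  fixes V :: "'a set" and E :: "'a \<Rightarrow> 'a \<Rightarrow> bool" and w :: 'a
    and \<sigma> :: "'a list" and par :: "'a \<Rightarrow> 'a"
  assumes graph: "sgraph V E" and bfs: "bfs_tree V E w \<sigma> par"
begin

lemma adj_sym: "E x y \<Longrightarrow> E y x"
  and adj_irrefl: "\<not> E x x"
  using graph unfolding sgraph_def by blast+

lemma distinct_order: "distinct \<sigma>" and set_order: "set \<sigma> = V"
  using bfs unfolding bfs_tree_def by blast+

lemma order_nonempty: "\<sigma> \<noteq> []" and hd_order: "hd \<sigma> = w"
  using bfs unfolding bfs_tree_def by blast+

lemma root_in_V: "w \<in> V"
  using order_nonempty hd_order set_order hd_in_set by blast

lemma pos_root: "pos \<sigma> w = 0"
  using pos_nth[OF distinct_order, of 0] order_nonempty hd_order by (simp add: hd_conv_nth)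

lemma not_root_if_pos: "0 < pos \<sigma> v \<Longrightarrow> v \<noteq> w"
  using pos_root by auto

lemma pos_inject: "u \<in> V \<Longrightarrow> v \<in> V \<Longrightarrow> pos \<sigma> u = pos \<sigma> v \<Longrightarrow> u = v"
  using pos_eq_iff[OF distinct_order] set_order by blast

lemma before_iff: "u \<in> before \<sigma> v \<longleftrightarrow> u \<in> V \<and> pos \<sigma> u < pos \<sigma> v"
  unfolding before_def using in_set_take_iff_pos[OF distinct_order] set_order by blast

lemma parent:
  assumes "v \<in> V" and "v \<noteq> w"
  shows "E v (par v)" and "par v \<in> V" and "pos \<sigma> (par v) < pos \<sigma> v"
  using assms bfs before_iff unfolding bfs_tree_def by blast+

lemma parent_first_neighbour:
  "v \<in> V \<Longrightarrow> v \<noteq> w \<Longrightarrow> u \<in> V \<Longrightarrow> pos \<sigma> u < pos \<sigma> v \<Longrightarrow> E v u \<Longrightarrow> pos \<sigma> (par v) \<le> pos \<sigma> u"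
  using bfs before_iff unfolding bfs_tree_def by blast

lemma pos_less_if_parent_less:
  "u \<in> V \<Longrightarrow> v \<in> V \<Longrightarrow> u \<noteq> w \<Longrightarrow> v \<noteq> w \<Longrightarrow> pos \<sigma> (par u) < pos \<sigma> (par v) \<Longrightarrow> pos \<sigma> u < pos \<sigma> v"
  using bfs unfolding bfs_tree_def by blast

lemma parent_of_later_neighbour:
  assumes "v \<in> V" "v \<noteq> w" "x \<in> V" "pos \<sigma> v < pos \<sigma> x" "E x (par v)"
  shows "par x = par v"
proof -
  have x: "x \<noteq> w" using assms(4) not_root_if_pos by auto
  have "pos \<sigma> (par x) \<le> pos \<sigma> (par v)"
    using parent_first_neighbour[OF assms(3) x] parent[OF assms(1,2)] assms(4,5) by simp
  moreover have "\<not> pos \<sigma> (par x) < pos \<sigma> (par v)"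
    using pos_less_if_parent_less[OF assms(3,1) x assms(2)] assms(4) by auto
  ultimately show ?thesis using pos_inject parent[OF assms(3) x] parent[OF assms(1,2)] by force
qed

lemma earlier_neighbour_of_later_sibling:
  assumes girth: "girth_at_least V E 4"
    and v: "v \<in> V" "v \<noteq> w" and x: "x \<in> V" "x \<noteq> w" "par x = par v" "pos \<sigma> v < pos \<sigma> x"
    and y: "y \<in> V" "pos \<sigma> y < pos \<sigma> x" "E x y" "y \<noteq> par x"
  shows "pos \<sigma> y < pos \<sigma> v"
proof (cases "y = w")
  case True
  then show ?thesis using pos_root v root_in_V pos_inject by (metis neq0_conv)
next
  case yw: False
  consider "pos \<sigma> (par y) < pos \<sigma> (par v)" | "par y = par v" | "pos \<sigma> (par v) < pos \<sigma> (par y)"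
    using pos_inject parent(2)[OF y(1) yw] parent(2)[OF v] by (metis linorder_neqE_nat)
  then show ?thesis
  proof cases
    case 1
    then show ?thesis using pos_less_if_parent_less[OF y(1) v(1) yw v(2)] by blast
  next
    case 2
    have "{par v, x, y} \<subseteq> V" using parent(2)[OF v] x y by auto
    moreover have "distinct [par v, x, y]" using x y adj_irrefl parent(3)[OF x(1,2)] by auto
    ultimately show ?thesis
      using girth_4_no_triangle[OF girth] parent(1)[OF x(1,2)] parent(1)[OF y(1) yw] x(3) y(3) 2
      by (metis adj_sym)
  next
    case 3
    then show ?thesis using pos_less_if_parent_less[OF x(1) y(1) x(2) yw] x(3) y(2) by simp
  qed
qed

end

locale greedy_extension = bfs_order +
  fixes k :: nat and \<phi>' \<phi> :: "'a \<Rightarrow> nat"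
  assumes greedy: "greedy_coloring E w \<sigma> par k \<phi>' \<phi>"
begin

lemma greedy_prefix: "v \<in> V \<Longrightarrow> pos \<sigma> v < k \<Longrightarrow> \<phi> v = \<phi>' v"
  using greedy in_set_take_iff_pos[OF distinct_order] set_order
  unfolding greedy_coloring_def by blast

definition has_back_edge :: "'a \<Rightarrow> bool" where
  "has_back_edge v \<longleftrightarrow> (\<exists>u\<in>before \<sigma> v. E v u \<and> u \<noteq> par v)"

text \<open>The vertices whose colours rule (i) or (ii) avoids at \<open>v\<close>; for rule (ii) this is
  \<open>\<sigma>\<^sub>v \<inter> S\<^sub>v\<close>.\<close>
definition forbidden :: "'a \<Rightarrow> 'a set" where
  "forbidden v = (if has_back_edge v then {u\<in>before \<sigma> v. E v u}
     else before \<sigma> v \<inter> ({par v} \<union> {u\<in>set \<sigma>. u \<noteq> w \<and> u \<noteq> v \<and> par u = par v}))"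

lemma greedy_color_mex: "v \<in> V \<Longrightarrow> \<not> pos \<sigma> v < k \<Longrightarrow> \<phi> v = mex (\<phi> ` forbidden v)"
  using greedy in_set_drop_iff_pos[OF distinct_order] set_order
  unfolding greedy_coloring_def forbidden_def has_back_edge_def by (auto split: if_splits)

lemma finite_forbidden: "finite (forbidden v)"
  by (simp add: forbidden_def)

lemma greedy_color_pos: "v \<in> V \<Longrightarrow> \<not> pos \<sigma> v < k \<Longrightarrow> 0 < \<phi> v"
  using greedy_color_mex mex_pos finite_forbidden by simp

lemma greedy_color_avoids:
  "v \<in> V \<Longrightarrow> \<not> pos \<sigma> v < k \<Longrightarrow> u \<in> forbidden v \<Longrightarrow> \<phi> u \<noteq> \<phi> v"
  using greedy_color_mex mex_notin finite_forbidden by (metis finite_imageI image_eqI)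

lemma earlier_neighbour_forbidden:
  "v \<in> V \<Longrightarrow> u \<in> V \<Longrightarrow> pos \<sigma> u < pos \<sigma> v \<Longrightarrow> E v u \<Longrightarrow> u \<in> forbidden v"
  using before_iff unfolding forbidden_def has_back_edge_def by auto

lemma earlier_sibling_forbidden:
  "\<not> has_back_edge v \<Longrightarrow> v \<noteq> u \<Longrightarrow> u \<in> V \<Longrightarrow> u \<noteq> w \<Longrightarrow> par u = par v \<Longrightarrow> pos \<sigma> u < pos \<sigma> v
    \<Longrightarrow> u \<in> forbidden v"
  using before_iff set_order unfolding forbidden_def by auto

lemma greedy_proper:
  assumes "proper_on (set (take k \<sigma>)) E \<phi>'"
  shows "proper_on V E \<phi>"
proof -
  have "\<phi> u \<noteq> \<phi> v" if "u \<in> V" "v \<in> V" "E v u" "pos \<sigma> u < pos \<sigma> v" for u v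
  proof (cases "pos \<sigma> v < k")
    case True
    then show ?thesis using that assms greedy_prefix in_set_take_iff_pos[OF distinct_order] set_order
      unfolding proper_on_def by (metis adj_sym order.strict_trans)
  next
    case False
    then show ?thesis using that greedy_color_avoids earlier_neighbour_forbidden by blast
  qed
  moreover have "pos \<sigma> u \<noteq> pos \<sigma> v" if "u \<in> V" "v \<in> V" "E u v" for u v
    using that adj_irrefl pos_inject by blast
  ultimately show ?thesis unfolding proper_on_def
    by (metis adj_sym linorder_neqE_nat)
qed

lemma greedy_coloring_on:
  "coloring_on (set (take k \<sigma>)) \<phi>' \<Longrightarrow> coloring_on V \<phi>"
  using greedy_prefix greedy_color_pos in_set_take_iff_pos[OF distinct_order] set_order
  unfolding coloring_on_def by metis

lemma automorphism_fixes_next_vertex: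
  assumes girth: "girth_at_least V E 5"
    and f: "automorphism V E f" "\<forall>u\<in>V. \<phi> (f u) = \<phi> u"
    and v: "v \<in> V" "v \<noteq> w" "\<not> pos \<sigma> v < k"
    and fixed: "\<And>y. y \<in> V \<Longrightarrow> pos \<sigma> y < pos \<sigma> v \<Longrightarrow> f y = y"
  shows "f v = v"
proof (rule ccontr)
  assume moved: "f v \<noteq> v"
  define p x where "p = par v" and "x = f v"
  have f_into: "f u \<in> V" if "u \<in> V" for u
    using f(1) that unfolding automorphism_def bij_betw_def by auto
  have f_adj: "E (f u) (f u') \<longleftrightarrow> E u u'" and f_inj: "f u = f u' \<Longrightarrow> u = u'"
    if "u \<in> V" "u' \<in> V" for u u'
    using f(1) that unfolding automorphism_def bij_betw_def inj_on_def by auto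
  have p: "p \<in> V" "E v p" "pos \<sigma> p < pos \<sigma> v" using parent[OF v(1,2)] p_def by auto
  have "f p = p" using fixed p by blast
  then have x: "x \<in> V" "E x p" "x \<noteq> v"
    using f_into[OF v(1)] f_adj[OF v(1) p(1)] p(2) moved x_def by auto
  show False
  proof (cases "has_back_edge v")
    case True
    then obtain y where y: "y \<in> V" "pos \<sigma> y < pos \<sigma> v" "E v y" "y \<noteq> p"
      using before_iff p_def unfolding has_back_edge_def by auto
    have "f y = y" using fixed y(1,2) by blast
    then have "E x y" and "x \<noteq> y"
      using f_adj[OF v(1) y(1)] f_inj[OF v(1) y(1)] y(3) adj_irrefl x_def by auto
    moreover have "distinct [v, p, x, y]" using calculation(2) x y p adj_irrefl by auto
    ultimately show False
      using girth_5_no_square[OF girth, of v p x y] x y p v(1) adj_sym by auto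
  next
    case no_back_edge: False
    have "\<not> pos \<sigma> x < pos \<sigma> v"
      using fixed f_inj x v(1) x_def by metis
    then have later: "pos \<sigma> v < pos \<sigma> x" using pos_inject x v(1) by (metis linorder_neqE_nat)
    have x_par: "par x = p" and x_root: "x \<noteq> w"
      using parent_of_later_neighbour[OF v(1,2) x(1) later] x(2) p_def later not_root_if_pos by auto
    show False
    proof (cases "has_back_edge x")
      case True
      then obtain y where y: "y \<in> V" "pos \<sigma> y < pos \<sigma> x" "E x y" "y \<noteq> par x"
        using before_iff unfolding has_back_edge_def by auto
      have "pos \<sigma> y < pos \<sigma> v"
        using earlier_neighbour_of_later_sibling[OF girth_at_least_mono[OF girth] v(1,2) x(1) x_root]
          x_par p_def later y by simp
      moreover have "E v y" using fixed f_adj v(1) x_def y(1,3) calculation by metis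
      ultimately show False
        using no_back_edge y(1,4) x_par p_def before_iff unfolding has_back_edge_def by auto
    next
      case False
      have "v \<in> forbidden x"
        using earlier_sibling_forbidden[OF False] x v x_par p_def later by auto
      then have "\<phi> v \<noteq> \<phi> x" using greedy_color_avoids x(1) v(3) later by auto
      then show False using f(2) v(1) x_def by simp
    qed
  qed
qed

lemma automorphism_fixes_all:
  assumes girth: "girth_at_least V E 5" and "0 < k"
    and f: "automorphism V E f" "\<forall>u\<in>V. \<phi> (f u) = \<phi> u"
    and prefix_fixed: "\<And>u. u \<in> V \<Longrightarrow> pos \<sigma> u < k \<Longrightarrow> f u = u"
  shows "v \<in> V \<Longrightarrow> f v = v"
proof (induction "pos \<sigma> v" arbitrary: v rule: less_induct)
  case less
  show ?case
  proof (cases "pos \<sigma> v < k")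
    case True
    then show ?thesis using prefix_fixed less.prems by blast
  next
    case False
    then have "v \<noteq> w" using pos_root \<open>0 < k\<close> by auto
    then show ?thesis
      using automorphism_fixes_next_vertex[OF girth f less.prems _ False] less.hyps by blast
  qed
qed

lemma greedy_distinguishing:
  assumes "girth_at_least V E 5" and "0 < k"
    and "\<forall>u\<in>set (take k \<sigma>). fixes_vertex V E \<phi> u"
  shows "distinguishing V E \<phi>"
  unfolding distinguishing_def fixes_vertex_def
proof (intro ballI allI impI)
  fix u f assume "u \<in> V" and f: "automorphism V E f \<and> (\<forall>v\<in>V. \<phi> (f v) = \<phi> v)"
  moreover have "f v = v" if "v \<in> V" "pos \<sigma> v < k" for v
    using assms(3) f that in_set_take_iff_pos[OF distinct_order] set_order
    unfolding fixes_vertex_def by blast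
  ultimately show "f u = u" using automorphism_fixes_all[OF assms(1,2)] by blast
qed

end

theorem lemma2:
  fixes V :: "'a set" and E :: "'a \<Rightarrow> 'a \<Rightarrow> bool" and w :: 'a
    and \<sigma> :: "'a list" and par :: "'a \<Rightarrow> 'a" and k :: nat
    and \<phi>' \<phi> :: "'a \<Rightarrow> nat"
  assumes "sgraph V E" and "connected_graph V E" and "girth_at_least V E 5"
    and "w \<in> V" and "bfs_tree V E w \<sigma> par"
    and "1 \<le> k" and "k \<le> length \<sigma>"
    and "coloring_on (set (take k \<sigma>)) \<phi>'" and "proper_on (set (take k \<sigma>)) E \<phi>'"
    and "greedy_coloring E w \<sigma> par k \<phi>' \<phi>"
    and "\<forall>u\<in>set (take k \<sigma>). fixes_vertex V E \<phi> u"
  shows "coloring_on V \<phi> \<and> proper_on V E \<phi> \<and> distinguishing V E \<phi>"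
proof -
  interpret greedy_extension V E w \<sigma> par k \<phi>' \<phi>
    using assms(1,5,10) by unfold_locales
  show ?thesis
    using greedy_coloring_on[OF assms(8)] greedy_proper[OF assms(9)]
      greedy_distinguishing[OF assms(3) _ assms(11)] assms(6) by simp
qed

end
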